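(* Let $(G,+)$ be an abelian group with identity $0$, and let $M$ and $N$ be matroids over $G$, both of rank $n$, such that $|E(M)|=|E(N)|=n+1<p(G)$. Assume further that $N$ is a coloopless sparse paving matroid. If $0\notin E(N)$, then $M$ is matched to $N$.
   Context: $p(G)$ denotes the smallest cardinality of a nonzero subgroup of $G$. A matroid over $G$ is a matroid $M$ whose finite ground set $E(M)$ is a subset of $G$; all matroids are assumed loopless. A matroid of rank $n$ is paving if every $(n-1)$-element subset of its ground set is independent; it is sparse paving if both it and its dual matroid are paving. A coloop is an element belonging to every basis; a matroid is coloopless if it has no coloop. For matroids $M,N$ over $G$ with $r(M)=r(N)=n>0$ and bases $\mathcal{M}=\{a_1,\dots,a_n\}$ of $M$ and $\mathcal{N}=\{b_1,\dots,b_n\}$ of $N$, $\mathcal{M}$ is matched to $\mathcal{N}$ if there is a permutation $\pi\in S_n$ with $a_i+b_{\pi(i)}\notin E(M)$ for all $i$. $M$ is matched to $N$ if for every basis $\mathcal{M}$ of $M$ there exists a basis $\mathcal{N}$ of $N$ such that $\mathcal{M}$ is matched to $\mathcal{N}$. *)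

theory Defs
  imports Main "HOL-Library.Extended_Nat"
begin

text \<open>A matroid is given by its finite ground set E and its set of bases.
  All matroids are assumed loopless.\<close>

definition matroid :: "'a set \<Rightarrow> 'a set set \<Rightarrow> bool" where
  "matroid E Bs \<longleftrightarrow> finite E \<and> Bs \<noteq> {} \<and> (\<forall>B\<in>Bs. B \<subseteq> E) \<and>
     (\<forall>B1\<in>Bs. \<forall>B2\<in>Bs. \<forall>x\<in>B1 - B2. \<exists>y\<in>B2 - B1. insert y (B1 - {x}) \<in> Bs)"

definition loopless :: "'a set \<Rightarrow> 'a set set \<Rightarrow> bool" where
  "loopless E Bs \<longleftrightarrow> (\<forall>e\<in>E. \<exists>B\<in>Bs. e \<in> B)"

definition indep :: "'a set set \<Rightarrow> 'a set \<Rightarrow> bool" where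
  "indep Bs X \<longleftrightarrow> (\<exists>B\<in>Bs. X \<subseteq> B)"

definition mrank :: "'a set set \<Rightarrow> nat" where
  "mrank Bs = card (SOME B. B \<in> Bs)"

definition dual_bases :: "'a set \<Rightarrow> 'a set set \<Rightarrow> 'a set set" where
  "dual_bases E Bs = (\<lambda>B. E - B) ` Bs"

definition paving :: "'a set \<Rightarrow> 'a set set \<Rightarrow> bool" where
  "paving E Bs \<longleftrightarrow> (\<forall>X. X \<subseteq> E \<and> card X = mrank Bs - 1 \<longrightarrow> indep Bs X)"

definition sparse_paving :: "'a set \<Rightarrow> 'a set set \<Rightarrow> bool" where
  "sparse_paving E Bs \<longleftrightarrow> paving E Bs \<and> paving E (dual_bases E Bs)"

definition coloop :: "'a set \<Rightarrow> 'a set set \<Rightarrow> 'a \<Rightarrow> bool" where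
  "coloop E Bs e \<longleftrightarrow> e \<in> E \<and> (\<forall>B\<in>Bs. e \<in> B)"

definition coloopless :: "'a set \<Rightarrow> 'a set set \<Rightarrow> bool" where
  "coloopless E Bs \<longleftrightarrow> (\<forall>e\<in>E. \<not> coloop E Bs e)"

text \<open>Subgroups of the abelian group (type class ab_group_add) and p(G)
  as an extended natural (\<infinity> if there is no finite nonzero subgroup).\<close>

definition is_subgroup :: "'a::ab_group_add set \<Rightarrow> bool" where
  "is_subgroup H \<longleftrightarrow> 0 \<in> H \<and> (\<forall>x\<in>H. \<forall>y\<in>H. x + y \<in> H) \<and> (\<forall>x\<in>H. - x \<in> H)"

definition p_grp :: "'a::ab_group_add itself \<Rightarrow> enat" where
  "p_grp _ = Inf ((\<lambda>H. if finite H then enat (card H) else \<infinity>) `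
                    {H :: 'a set. is_subgroup H \<and> H \<noteq> {0}})"

definition basis_matched :: "'a::ab_group_add set \<Rightarrow> 'a set \<Rightarrow> 'a set \<Rightarrow> bool" where
  "basis_matched EM A C \<longleftrightarrow> (\<exists>f. bij_betw f A C \<and> (\<forall>a\<in>A. a + f a \<notin> EM))"

definition matched_to :: "'a::ab_group_add set \<Rightarrow> 'a set set \<Rightarrow> 'a set set \<Rightarrow> bool" where
  "matched_to EM BM BN \<longleftrightarrow> (\<forall>A\<in>BM. \<exists>C\<in>BN. basis_matched EM A C)"

end

theory Submission
  imports Defs "HOL-Library.Set_Algebras"
begin

text \<open>Fix a basis A of M and let a \<in> A be compatible with b \<in> E(N) when a + b \<notin> E(M).
  If Hall's condition failed for some S \<subseteq> A, then S + T \<subseteq> E(M) for T = {0} \<union> (E(N) minus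
  the neighbours of S), and |S| + |T| - 1 > n + 1 = |E(M)| would contradict the
  Cauchy-Davenport inequality |S + T| \<ge> min(p(G), |S| + |T| - 1) (Karolyi's form for
  arbitrary abelian groups, which follows from Dyson's e-transform). So A can be matched
  injectively into E(N); the image C has n elements, and as the single element of
  E(N) - C is not a coloop, some basis of N avoids it, i.e. C is a basis of N.\<close>

section \<open>Hall's marriage theorem\<close>

definition hall_condition :: "'a set \<Rightarrow> ('a \<Rightarrow> 'b set) \<Rightarrow> bool" where
  "hall_condition A N \<longleftrightarrow> (\<forall>S\<subseteq>A. card S \<le> card (\<Union> (N ` S)))"

lemma hall_conditionD: "hall_condition A N \<Longrightarrow> S \<subseteq> A \<Longrightarrow> card S \<le> card (\<Union> (N ` S))"
  unfolding hall_condition_def by blast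

lemma hall_condition_subset: "hall_condition A N \<Longrightarrow> S \<subseteq> A \<Longrightarrow> hall_condition S N"
  unfolding hall_condition_def by blast

lemma inj_on_if_combine:
  assumes "inj_on f S" "\<forall>a\<in>S. f a \<in> N a"
    and "inj_on g (A - S)" "\<forall>a\<in>A - S. g a \<in> N a - f ` S"
  shows "inj_on (\<lambda>a. if a \<in> S then f a else g a) A \<and> (\<forall>a\<in>A. (if a \<in> S then f a else g a) \<in> N a)"
proof
  show "inj_on (\<lambda>a. if a \<in> S then f a else g a) A"
    using assms(1,3,4) unfolding inj_on_def by (metis DiffD2 DiffI image_eqI)
  show "\<forall>a\<in>A. (if a \<in> S then f a else g a) \<in> N a"
    using assms(2,4) by simp
qed

lemma hall_condition_Diff_critical:
  assumes "hall_condition A N" "finite A" "\<forall>a\<in>A. finite (N a)"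
    and "S \<subseteq> A" "card S = card (\<Union> (N ` S))"
  shows "hall_condition (A - S) (\<lambda>a. N a - \<Union> (N ` S))"
  unfolding hall_condition_def
proof (intro allI impI)
  fix T assume T: "T \<subseteq> A - S"
  have fin: "finite T" "finite S"
    using T assms(2,4) by (meson Diff_subset finite_subset subset_trans)+
  then have finU: "finite (\<Union> (N ` (T \<union> S)))"
    using T assms(3,4) by blast
  have "card T + card S = card (T \<union> S)"
    using T fin by (subst card_Un_disjoint) auto
  also have "\<dots> \<le> card (\<Union> (N ` (T \<union> S)))"
    using T assms(4) by (intro hall_conditionD[OF assms(1)]) blast
  also have "\<dots> = card ((\<Union> (N ` T) - \<Union> (N ` S)) \<union> \<Union> (N ` S))"
    by (rule arg_cong[of _ _ card]) blast
  also have "\<dots> = card (\<Union> (N ` T) - \<Union> (N ` S)) + card (\<Union> (N ` S))"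
    using finU by (intro card_Un_disjoint) auto
  finally have "card T \<le> card (\<Union> (N ` T) - \<Union> (N ` S))"
    using assms(5) by simp
  moreover have "\<Union> ((\<lambda>a. N a - \<Union> (N ` S)) ` T) = \<Union> (N ` T) - \<Union> (N ` S)"
    by blast
  ultimately show "card T \<le> card (\<Union> ((\<lambda>a. N a - \<Union> (N ` S)) ` T))"
    by simp
qed

lemma hall_condition_Diff_singleton:
  assumes "\<forall>S\<subseteq>A. S \<noteq> {} \<and> S \<noteq> A \<longrightarrow> card S < card (\<Union> (N ` S))" "a \<in> A"
  shows "hall_condition (A - {a}) (\<lambda>x. N x - {y})"
  unfolding hall_condition_def
proof (intro allI impI)
  fix T assume T: "T \<subseteq> A - {a}"
  show "card T \<le> card (\<Union> ((\<lambda>x. N x - {y}) ` T))"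
  proof (cases "T = {}")
    case False
    then have "card T < card (\<Union> (N ` T))"
      using assms T by blast
    also have "\<dots> \<le> card (\<Union> (N ` T) - {y}) + 1"
      using diff_card_le_card_Diff[of "{y}" "\<Union> (N ` T)"] by simp
    also have "\<Union> (N ` T) - {y} = \<Union> ((\<lambda>x. N x - {y}) ` T)"
      by blast
    finally show ?thesis by simp
  qed simp
qed

theorem hall_marriage:
  assumes "finite A" "\<forall>a\<in>A. finite (N a)" "hall_condition A N"
  shows "\<exists>f. inj_on f A \<and> (\<forall>a\<in>A. f a \<in> N a)"
  using assms
proof (induction A arbitrary: N rule: finite_psubset_induct)
  case (psubset A)
  \<comment> \<open>Halmos-Vaughan: a critical set S is matched first and A - S is matched around it;
    without one, any edge at a can be removed while keeping Hall's condition.\<close>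
  consider (empty) "A = {}"
    | (critical) S where "S \<subseteq> A" "S \<noteq> {}" "S \<noteq> A" "card S = card (\<Union> (N ` S))"
    | (surplus) a where "a \<in> A" "\<forall>S\<subseteq>A. S \<noteq> {} \<and> S \<noteq> A \<longrightarrow> card S < card (\<Union> (N ` S))"
    using hall_conditionD[OF psubset.prems(2)] by (meson ex_in_conv le_neq_implies_less)
  then show ?case
  proof cases
    case empty
    then show ?thesis by simp
  next
    case critical
    obtain f where f: "inj_on f S" "\<forall>a\<in>S. f a \<in> N a"
      using psubset.IH[of S N] critical(1,3) psubset.prems hall_condition_subset by blast
    obtain g where g: "inj_on g (A - S)" "\<forall>a\<in>A - S. g a \<in> N a - \<Union> (N ` S)"
      using psubset.IH[of "A - S" "\<lambda>a. N a - \<Union> (N ` S)"] critical(1,2) psubset.prems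
        hall_condition_Diff_critical[OF psubset.prems(2) psubset.hyps psubset.prems(1) critical(1,4)]
      by blast
    have "f ` S \<subseteq> \<Union> (N ` S)"
      using f(2) by blast
    then have "\<forall>a\<in>A - S. g a \<in> N a - f ` S"
      using g(2) by auto
    then show ?thesis
      using inj_on_if_combine[OF f g(1)] by blast
  next
    case surplus
    have "card {a} \<le> card (N a)"
      using hall_conditionD[OF psubset.prems(2), of "{a}"] surplus(1) by simp
    then obtain y where y: "y \<in> N a"
      by fastforce
    obtain g where g: "inj_on g (A - {a})" "\<forall>x\<in>A - {a}. g x \<in> N x - {y}"
      using psubset.IH[of "A - {a}" "\<lambda>x. N x - {y}"] surplus psubset.prems
        hall_condition_Diff_singleton[OF surplus(2,1)] by blast
    show ?thesis
      using inj_on_if_combine[of "\<lambda>_. y" "{a}" N g A] y g by auto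
  qed
qed

section \<open>The Cauchy-Davenport inequality in abelian groups\<close>

definition stabilizer :: "'a::ab_group_add set \<Rightarrow> 'a set" where
  "stabilizer A = {g. (+) g ` A = A}"

lemma is_subgroup_stabilizer: "is_subgroup (stabilizer A)"
proof -
  have sum: "(+) (g + h) ` A = A" if "(+) g ` A = A" "(+) h ` A = A" for g h
  proof -
    have "(+) (g + h) ` A = (+) g ` (+) h ` A"
      by (simp add: image_image add.assoc)
    then show ?thesis
      using that by simp
  qed
  have neg: "(+) (- g) ` A = A" if "(+) g ` A = A" for g
  proof -
    have "(+) (- g) ` A = (+) (- g) ` (+) g ` A"
      using that by simp
    then show ?thesis
      by (simp add: image_image)
  qed
  show ?thesis
    unfolding is_subgroup_def stabilizer_def using sum neg by simp
qed

lemma stabilizer_if_translate_subset: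
  assumes "finite A" "(+) g ` A \<subseteq> A"
  shows "g \<in> stabilizer A"
proof -
  have "card ((+) g ` A) = card A"
    by (simp add: card_image)
  then have "(+) g ` A = A"
    using card_subset_eq[OF assms(1,2)] by simp
  then show ?thesis
    unfolding stabilizer_def by simp
qed

lemma card_stabilizer_le:
  assumes "finite A" "a \<in> A"
  shows "finite (stabilizer A)" and "card (stabilizer A) \<le> card A"
proof -
  have "(+) a ` stabilizer A \<subseteq> A"
  proof (rule image_subsetI)
    fix g assume "g \<in> stabilizer A"
    then have "(+) g ` A = A"
      by (simp add: stabilizer_def)
    then have "g + a \<in> A"
      using assms(2) by blast
    then show "a + g \<in> A"
      by (simp add: add.commute)
  qed
  moreover have "inj_on ((+) a) (stabilizer A)"
    by simp
  ultimately show "finite (stabilizer A)" and "card (stabilizer A) \<le> card A"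
    using assms(1) by (metis finite_imageD finite_subset, metis card_image card_mono)
qed

lemma p_grp_le_card_subgroup:
  fixes H :: "'a::ab_group_add set"
  assumes "is_subgroup H" "H \<noteq> {0}" "finite H"
  shows "p_grp TYPE('a) \<le> enat (card H)"
  unfolding p_grp_def using assms by (intro Inf_lower) (auto intro!: image_eqI[where x = H])

lemma p_grp_le_card_periodic:
  fixes A :: "'a::ab_group_add set"
  assumes "finite A" "A \<noteq> {}" "g \<in> stabilizer A" "g \<noteq> 0"
  shows "p_grp TYPE('a) \<le> enat (card A)"
proof -
  obtain a where "a \<in> A"
    using assms(2) by blast
  note stab = card_stabilizer_le[OF assms(1) this]
  have "stabilizer A \<noteq> {0}"
    using assms(3,4) by blast
  then have "p_grp TYPE('a) \<le> enat (card (stabilizer A))"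
    using p_grp_le_card_subgroup[OF is_subgroup_stabilizer] stab(1) by blast
  also have "\<dots> \<le> enat (card A)"
    using stab(2) by simp
  finally show ?thesis .
qed

lemma card_le_card_sumset:
  fixes A B :: "'a::ab_group_add set"
  assumes "finite A" "finite B" "b \<in> B"
  shows "card A \<le> card (A + B)"
proof -
  have "A + {b} \<subseteq> A + B"
    using assms(3) by (intro set_plus_mono2) auto
  then show ?thesis
    using card_plus_sing[of A b] card_mono[OF finite_set_plus[OF assms(1,2)]] by metis
qed

lemma card_dyson_transform:
  fixes A B :: "'a::ab_group_add set"
  assumes "finite A" "finite B"
  shows "card (A \<union> (+) e ` B) + card {b \<in> B. e + b \<in> A} = card A + card B"
proof -
  have "A \<inter> (+) e ` B = (+) e ` {b \<in> B. e + b \<in> A}"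
    by blast
  then have "card (A \<inter> (+) e ` B) = card {b \<in> B. e + b \<in> A}"
    by (simp add: card_image)
  moreover have "card ((+) e ` B) = card B"
    by (simp add: card_image)
  ultimately show ?thesis
    using card_Un_Int[of A "(+) e ` B"] assms by simp
qed

lemma dyson_transform_sumset_subset:
  fixes A B :: "'a::ab_group_add set"
  shows "(A \<union> (+) e ` B) + {b \<in> B. e + b \<in> A} \<subseteq> A + B"
proof
  fix z assume "z \<in> (A \<union> (+) e ` B) + {b \<in> B. e + b \<in> A}"
  then obtain x y where z: "z = x + y" "x \<in> A \<union> (+) e ` B" "y \<in> B" "e + y \<in> A"
    by (auto elim: set_plus_elim)
  show "z \<in> A + B"
  proof (cases "x \<in> A")
    case False
    then obtain w where "w \<in> B" "x = e + w"
      using z(2) by blast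
    then have "z = (e + y) + w"
      using z(1) by (simp add: algebra_simps)
    then show ?thesis
      using \<open>w \<in> B\<close> z(4) by blast
  qed (use z in blast)
qed

lemma card_sumset_ge_if_periodic:
  fixes A B :: "'a::ab_group_add set"
  assumes "finite A" "finite B" "A \<noteq> {}" "b \<in> B"
    and closed: "\<forall>a\<in>A. \<forall>b\<in>B. \<forall>b'\<in>B. a - b + b' \<in> A"
  shows "min (p_grp TYPE('a)) (enat (card A + card B - 1)) \<le> enat (card (A + B))"
proof -
  have A_le: "card A \<le> card (A + B)"
    using card_le_card_sumset[OF assms(1,2,4)] .
  show ?thesis
  proof (cases "B = {b}")
    case True
    then show ?thesis
      using A_le by (simp add: min.coboundedI2)
  next
    case False
    then obtain b' where b': "b' \<in> B" "b' \<noteq> b"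
      using assms(4) by blast
    have "(+) (b' - b) ` A \<subseteq> A"
      using closed assms(4) b'(1) by (auto simp: algebra_simps)
    then have "p_grp TYPE('a) \<le> enat (card A)"
      using p_grp_le_card_periodic[OF assms(1,3) stabilizer_if_translate_subset[OF assms(1)]] b'(2)
      by simp
    also have "\<dots> \<le> enat (card (A + B))"
      using A_le by simp
    finally show ?thesis
      by (rule min.coboundedI1)
  qed
qed

theorem card_sumset_ge_min_p_grp:
  fixes A B :: "'a::ab_group_add set"
  assumes "finite A" "finite B" "A \<noteq> {}" "B \<noteq> {}"
  shows "min (p_grp TYPE('a)) (enat (card A + card B - 1)) \<le> enat (card (A + B))"
  using assms
proof (induction "card B" arbitrary: A B rule: less_induct)
  case less
  show ?case
  proof (cases "\<forall>a\<in>A. \<forall>b\<in>B. \<forall>b'\<in>B. a - b + b' \<in> A")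
    case True
    obtain b where "b \<in> B"
      using less.prems(4) by blast
    then show ?thesis
      using card_sumset_ge_if_periodic less.prems True by blast
  next
    case False
    then obtain a b b' where abb: "a \<in> A" "b \<in> B" "b' \<in> B" "a - b + b' \<notin> A"
      by blast
    \<comment> \<open>Dyson's e-transform keeps |A| + |B|, does not enlarge the sumset, and
      shrinks B since it drops b'.\<close>
    define e where "e = a - b"
    define A' where "A' = A \<union> (+) e ` B"
    define B' where "B' = {y \<in> B. e + y \<in> A}"
    have "b \<in> B'" "b' \<notin> B'"
      using abb by (simp_all add: B'_def e_def add.commute)
    then have "card B' < card B"
      using less.prems(2) abb(3) by (intro psubset_card_mono) (auto simp: B'_def)
    moreover have "finite A'" "finite B'" "A' \<noteq> {}" "B' \<noteq> {}"
      using less.prems \<open>b \<in> B'\<close> by (auto simp: A'_def B'_def)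
    ultimately have "min (p_grp TYPE('a)) (enat (card A' + card B' - 1)) \<le> enat (card (A' + B'))"
      using less.hyps by blast
    also have "card A' + card B' = card A + card B"
      unfolding A'_def B'_def using card_dyson_transform less.prems(1,2) by blast
    also have "card (A' + B') \<le> card (A + B)"
      unfolding A'_def B'_def
      using dyson_transform_sumset_subset finite_set_plus[OF less.prems(1,2)] by (rule card_mono[rotated])
    finally show ?thesis
      by simp
  qed
qed

section \<open>Matroids\<close>

lemma matroid_base_subset: "matroid E Bs \<Longrightarrow> B \<in> Bs \<Longrightarrow> B \<subseteq> E"
  unfolding matroid_def by blast

lemma matroid_finite_base: "matroid E Bs \<Longrightarrow> B \<in> Bs \<Longrightarrow> finite B"
  unfolding matroid_def by (meson finite_subset)

lemma matroid_exchange: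
  "matroid E Bs \<Longrightarrow> B1 \<in> Bs \<Longrightarrow> B2 \<in> Bs \<Longrightarrow> x \<in> B1 - B2 \<Longrightarrow>
    \<exists>y\<in>B2 - B1. insert y (B1 - {x}) \<in> Bs"
  unfolding matroid_def by (elim conjE) blast

lemma matroid_card_base_le:
  assumes "matroid E Bs" "B1 \<in> Bs" "B2 \<in> Bs"
  shows "card B1 \<le> card B2"
  using assms(2)
proof (induction "card (B1 - B2)" arbitrary: B1 rule: less_induct)
  case less
  have fin: "finite B" if "B \<in> Bs" for B
    using matroid_finite_base[OF assms(1) that] .
  show ?case
  proof (cases "B1 \<subseteq> B2")
    case True
    then show ?thesis
      using fin[OF assms(3)] by (rule card_mono[rotated])
  next
    case False
    then obtain x where x: "x \<in> B1 - B2"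
      by blast
    then obtain y where y: "y \<in> B2 - B1" "insert y (B1 - {x}) \<in> Bs"
      using matroid_exchange[OF assms(1) less.prems assms(3)] by blast
    have "card ((B1 - B2) - {x}) < card (B1 - B2)"
      using x fin[OF less.prems] by (intro card_Diff1_less) auto
    moreover have "insert y (B1 - {x}) - B2 = (B1 - B2) - {x}"
      using y(1) by blast
    ultimately have "card (insert y (B1 - {x}) - B2) < card (B1 - B2)"
      by simp
    then have "card (insert y (B1 - {x})) \<le> card B2"
      using less.hyps y(2) by blast
    moreover have "card (insert y (B1 - {x})) = card B1"
      using x y(1) fin[OF less.prems] card_Suc_Diff1[of B1 x] by (simp add: card_insert_if)
    ultimately show ?thesis
      by simp
  qed
qed

lemma matroid_card_base:
  assumes "matroid E Bs" "B \<in> Bs"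
  shows "card B = mrank Bs"
proof -
  have "(SOME B. B \<in> Bs) \<in> Bs"
    using assms(2) by (rule someI)
  then show ?thesis
    unfolding mrank_def using matroid_card_base_le assms by (meson le_antisym)
qed

lemma coloopless_corank_one_base:
  assumes "matroid E Bs" "coloopless E Bs" "card E = mrank Bs + 1"
    and "C \<subseteq> E" "card C = mrank Bs"
  shows "C \<in> Bs"
proof -
  have "finite E"
    using assms(1) by (simp add: matroid_def)
  then have "card (E - C) = 1"
    using assms(3-5) by (simp add: card_Diff_subset finite_subset)
  then obtain e where e: "E - C = {e}"
    by (rule card_1_singletonE)
  then have "\<not> coloop E Bs e"
    using assms(2) unfolding coloopless_def by blast
  then obtain B where B: "B \<in> Bs" "e \<notin> B"
    using e unfolding coloop_def by blast
  have "B \<subseteq> C"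
    using matroid_base_subset[OF assms(1) B(1)] B(2) e by auto
  moreover have "card B = card C"
    using matroid_card_base[OF assms(1) B(1)] assms(5) by simp
  ultimately have "B = C"
    using \<open>finite E\<close> assms(4) by (metis card_subset_eq finite_subset)
  then show ?thesis
    using B(1) by simp
qed

lemma hall_condition_sum_avoiding:
  fixes EM EN :: "'a::ab_group_add set"
  assumes "finite EM" "finite EN" "0 \<notin> EN" "card EM \<le> card EN"
    and "enat (card EM) < p_grp TYPE('a)" "A \<subseteq> EM"
  shows "hall_condition A (\<lambda>a. {b \<in> EN. a + b \<notin> EM})"
  unfolding hall_condition_def
proof (intro allI impI)
  fix S assume "S \<subseteq> A"
  define U where "U = \<Union> ((\<lambda>a. {b \<in> EN. a + b \<notin> EM}) ` S)"
  define T where "T = insert 0 (EN - U)"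
  show "card S \<le> card U"
  proof (cases "S = {}")
    case False
    have fin: "finite S" "finite T"
      using \<open>S \<subseteq> A\<close> assms(1,2,6) unfolding T_def by (auto intro: finite_subset)
    have "U \<subseteq> EN"
      unfolding U_def by blast
    then have card_T: "card T = card EN - card U + 1"
      using assms(2,3) by (simp add: T_def card_Diff_subset finite_subset)
    have "S + T \<subseteq> EM"
      using \<open>S \<subseteq> A\<close> assms(6) by (auto simp: T_def U_def elim!: set_plus_elim)
    then have "card (S + T) \<le> card EM"
      using assms(1) by (rule card_mono[rotated])
    have "T \<noteq> {}"
      unfolding T_def by simp
    then have "min (p_grp TYPE('a)) (enat (card S + card T - 1)) \<le> enat (card (S + T))"
      using card_sumset_ge_min_p_grp[OF fin False] by blast
    also have "\<dots> \<le> enat (card EM)"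
      using \<open>card (S + T) \<le> card EM\<close> by simp
    finally have "enat (card S + card T - 1) \<le> enat (card EM)"
      unfolding min_le_iff_disj using assms(5) by (meson leD)
    then have "card S + card T - 1 \<le> card EM"
      by simp
    then show ?thesis
      using card_T assms(4) card_mono[OF assms(2) \<open>U \<subseteq> EN\<close>] by linarith
  qed simp
qed

theorem theorem2p14:
  fixes EM EN :: "'a::ab_group_add set" and BM BN :: "'a set set" and n :: nat
  assumes "matroid EM BM" and "loopless EM BM"
    and "matroid EN BN" and "loopless EN BN"
    and "mrank BM = n" and "mrank BN = n"
    and "card EM = n + 1" and "card EN = n + 1"
    and "enat (n + 1) < p_grp TYPE('a)"
    and "coloopless EN BN" and "sparse_paving EN BN"
    and "0 \<notin> EN"
  shows "matched_to EM BM BN"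
  unfolding matched_to_def
proof
  fix A assume "A \<in> BM"
  have fin: "finite EM" "finite EN"
    using assms(1,3) by (simp_all add: matroid_def)
  have A: "A \<subseteq> EM" "card A = n"
    using matroid_base_subset matroid_card_base assms(1,5) \<open>A \<in> BM\<close> by blast+
  define N where "N = (\<lambda>a. {b \<in> EN. a + b \<notin> EM})"
  have "hall_condition A N"
    unfolding N_def using hall_condition_sum_avoiding[OF fin assms(12)] assms(7-9) A(1) by simp
  moreover have "finite A"
    using A(1) fin(1) by (rule finite_subset)
  moreover have "\<forall>a\<in>A. finite (N a)"
    unfolding N_def using fin(2) by simp
  ultimately obtain f where f: "inj_on f A" "\<forall>a\<in>A. f a \<in> N a"
    using hall_marriage by blast
  have "f ` A \<subseteq> EN"
    using f(2) unfolding N_def by blast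
  moreover have "card (f ` A) = mrank BN"
    using card_image[OF f(1)] A(2) assms(6) by simp
  ultimately have "f ` A \<in> BN"
    using coloopless_corank_one_base[OF assms(3,10)] assms(6,8) by simp
  moreover have "basis_matched EM A (f ` A)"
    using f unfolding basis_matched_def N_def by (auto simp: bij_betw_def)
  ultimately show "\<exists>C\<in>BN. basis_matched EM A C"
    by blast
qed

end
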